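(* Consider a single round of the following quantum protocol, with honest Bob and an arbitrary strategy of Alice. 1. Alice prepares an arbitrary (possibly mixed) state $\rho_{AB}$ and sends subsystem $B$ to Bob through a noiseless channel. 2. Bob chooses a uniformly random bit $b$, independent of everything else, and announces it. 3. Alice performs a two-outcome POVM on subsystem $A$ (which may depend on $b$) and announces a bit $a$ determined by its outcome. 4. Bob measures his system with the projective measurement $\{|\psi_a\rangle\langle\psi_a|,\ I-|\psi_a\rangle\langle\psi_a|\}$, setting $f=1$ for the first outcome and $f=0$ otherwise. Bob's output bit is $y=a\oplus b$. Let $E(f)=\mathrm P(f=1)$. Then for every $c\in\{0,1\}$, \[ \mathrm P(y=c)\ \le\ \mathcal F(E(f)), \qquad\text{where}\qquad \mathcal F(u)=\min\Big\{\tfrac12+\frac{\sqrt{1-u}}{\sqrt2\,\sin^2\theta}+\frac{1-u}{\sin^2\theta},\ 1\Big\}. \] Moreover, $\mathcal F$ is concave and monotonically non-increasing on $[0,1]$.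
   Context: Fix $\theta\in(0,\pi/2]$. Let $|\psi_0\rangle,|\psi_1\rangle$ be two pure states with $|\langle\psi_0|\psi_1\rangle|^2=\cos^2\theta$. *)

theory Defs
  imports "HOL-Analysis.Analysis"
begin

text \<open>A Hilbert space of dimension CARD('n) is
  modelled by vectors complex^'n, operators by complex^'n^'n. The composite system AB
  is indexed by the product type 'a \<times> 'b (Kronecker/tensor product). Bits are bool
  (False = 0, True = 1), so a \<oplus> b is (a \<noteq> b).\<close>

definition cinner :: "complex^'n \<Rightarrow> complex^'n \<Rightarrow> complex" where
  "cinner u v = (\<Sum>i\<in>UNIV. cnj (u $ i) * v $ i)"

definition proj :: "complex^'n \<Rightarrow> complex^'n^'n" where
  "proj \<psi> = (\<chi> i j. \<psi> $ i * cnj (\<psi> $ j))"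

definition kron :: "complex^'a^'a \<Rightarrow> complex^'b^'b \<Rightarrow> complex^('a \<times> 'b)^('a \<times> 'b)" where
  "kron X Y = (\<chi> p q. X $ fst p $ fst q * Y $ snd p $ snd q)"

definition trace :: "complex^'n^'n \<Rightarrow> complex" where
  "trace A = (\<Sum>i\<in>UNIV. A $ i $ i)"

definition psd :: "complex^'n^'n \<Rightarrow> bool" where
  "psd A \<longleftrightarrow> (\<forall>v. cinner v (A *v v) \<in> \<real> \<and> 0 \<le> Re (cinner v (A *v v)))"

definition density :: "complex^'n^'n \<Rightarrow> bool" where
  "density \<rho> \<longleftrightarrow> psd \<rho> \<and> trace \<rho> = 1"

definition povm2 :: "(bool \<Rightarrow> complex^'n^'n) \<Rightarrow> bool" where
  "povm2 M \<longleftrightarrow> psd (M False) \<and> psd (M True) \<and> M False + M True = mat 1"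

definition prob :: "complex^'n^'n \<Rightarrow> complex^'n^'n \<Rightarrow> real" where
  "prob \<rho> X = Re (trace (\<rho> ** X))"

text \<open>Protocol probabilities. b is Bob's uniform bit, M b is Alice's POVM on A after
  hearing b (outcome = announced bit a), Bob measures {|\<psi>_a\<rangle>\<langle>\<psi>_a|, I - |\<psi>_a\<rangle>\<langle>\<psi>_a|} on B.\<close>
definition Ef :: "complex^('a::finite \<times> 'b::finite)^('a \<times> 'b) \<Rightarrow> (bool \<Rightarrow> bool \<Rightarrow> complex^'a^'a)
                   \<Rightarrow> (bool \<Rightarrow> complex^'b) \<Rightarrow> real" where
  "Ef \<rho> M \<psi> = (\<Sum>b\<in>UNIV. \<Sum>a\<in>UNIV. (1/2) * prob \<rho> (kron (M b a) (proj (\<psi> a))))"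

definition Py :: "complex^('a::finite \<times> 'b::finite)^('a \<times> 'b) \<Rightarrow> (bool \<Rightarrow> bool \<Rightarrow> complex^'a^'a)
                   \<Rightarrow> bool \<Rightarrow> real" where
  "Py \<rho> M c = (\<Sum>b\<in>UNIV. \<Sum>a\<in>{a. (a \<noteq> b) = c}. (1/2) * prob \<rho> (kron (M b a) (mat 1)))"

definition Fbound :: "real \<Rightarrow> real \<Rightarrow> real" where
  "Fbound \<theta> u = min (1/2 + sqrt (1 - u) / (sqrt 2 * (sin \<theta>)\<^sup>2) + (1 - u) / (sin \<theta>)\<^sup>2) 1"

end

theory Submission
  imports Defs
begin

text \<open>
  Write X(b,a) = Tr_A (\<rho> (M(b,a) \<otimes> I)) for Bob's unnormalised state when his bit is b and
  Alice announces a, so that X(b,0) + X(b,1) is Bob's reduced state for both b. The bias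
  2 P(y = c) - 1 equals tr X(0,c) - tr X(1,c), while 1 - E(f) is the weight that the X(b,a) put
  outside the announced states \<psi>(a). Evaluating X(0,c) + X(0,\<not>c) = X(1,c) + X(1,\<not>c) on the
  component of \<psi>(c) orthogonal to \<psi>(\<not>c), which has squared norm sin(\<theta>)^2 and is nearly
  invisible to X(1,\<not>c), bounds sin(\<theta>)^2 times the difference of the fidelities of X(0,c) and
  X(1,c) with \<psi>(c) by the weights outside the announced states, up to cross terms controlled by
  2 |Re \<langle>w, X u\<rangle>| \<le> t \<langle>u, X u\<rangle> + \<langle>w, X w\<rangle> / t. Optimising over t produces the square root
  in the bound. The positivity of tr (X K) for positive X and K, used throughout, comes from
  writing a positive matrix as a sum of rank-one projectors by Cholesky elimination.
\<close>

section \<open>The bounding function\<close>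

lemma convex_combination_sqrt_le:
  fixes a b t :: real
  assumes "0 \<le> a" "0 \<le> b" "0 \<le> t" "t \<le> 1"
  shows "(1 - t) * sqrt a + t * sqrt b \<le> sqrt ((1 - t) * a + t * b)"
proof (rule real_le_rsqrt)
  have "2 * (sqrt a * sqrt b) \<le> a + b"
    using assms sum_squares_bound[of "sqrt a" "sqrt b"] by simp
  then have "t * (1 - t) * (2 * (sqrt a * sqrt b)) \<le> t * (1 - t) * (a + b)"
    using assms by (intro mult_left_mono) auto
  then show "((1 - t) * sqrt a + t * sqrt b)\<^sup>2 \<le> (1 - t) * a + t * b"
    using assms by (simp add: power2_eq_square algebra_simps real_sqrt_mult[symmetric])
qed

lemma concave_on_sqrt_comp:
  assumes f: "concave_on S f" and nonneg: "\<And>x. x \<in> S \<Longrightarrow> 0 \<le> f x"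
  shows "concave_on S (\<lambda>x. sqrt (f x))"
proof -
  have "(1 - t) * sqrt (f x) + t * sqrt (f y) \<le> sqrt (f ((1 - t) *\<^sub>R x + t *\<^sub>R y))"
    if "0 \<le> t" "t \<le> 1" "x \<in> S" "y \<in> S" for t x y
  proof -
    have "(1 - t) * sqrt (f x) + t * sqrt (f y) \<le> sqrt ((1 - t) * f x + t * f y)"
      using that nonneg by (intro convex_combination_sqrt_le) auto
    also have "\<dots> \<le> sqrt (f ((1 - t) *\<^sub>R x + t *\<^sub>R y))"
      using concave_onD[OF f] that by simp
    finally show ?thesis .
  qed
  then show ?thesis
    unfolding concave_on_iff
    using concave_on_imp_convex[OF f] by (metis add_diff_cancel_right' le_add_same_cancel2)
qed

lemma concave_on_min:
  assumes f: "concave_on S f" and g: "concave_on S g"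
  shows "concave_on S (\<lambda>x. min (f x) (g x))"
proof -
  have "(1 - t) * min (f x) (g x) + t * min (f y) (g y)
      \<le> min (f ((1 - t) *\<^sub>R x + t *\<^sub>R y)) (g ((1 - t) *\<^sub>R x + t *\<^sub>R y))"
    if "0 \<le> t" "t \<le> 1" "x \<in> S" "y \<in> S" for t x y
  proof -
    have "(1 - t) * min (f x) (g x) + t * min (f y) (g y) \<le> (1 - t) * f x + t * f y"
      "(1 - t) * min (f x) (g x) + t * min (f y) (g y) \<le> (1 - t) * g x + t * g y"
      using that by (intro add_mono mult_left_mono; simp)+
    then show ?thesis
      using concave_onD[OF f] concave_onD[OF g] that by fastforce
  qed
  then show ?thesis
    unfolding concave_on_iff
    using concave_on_imp_convex[OF f] by (metis add_diff_cancel_right' le_add_same_cancel2)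
qed

lemma Fbound_concave: "concave_on {0..1} (Fbound \<theta>)"
proof -
  have lin: "concave_on {0..1} (\<lambda>u. 1 - u :: real)"
    by (simp add: concave_on_diff concave_on_const convex_on_ident)
  have "concave_on {0..1} (\<lambda>u. 1/2 + sqrt (1 - u) / (sqrt 2 * (sin \<theta>)\<^sup>2) + (1 - u) / (sin \<theta>)\<^sup>2)"
    by (intro concave_on_add concave_on_cdiv concave_on_sqrt_comp lin)
      (auto simp: concave_on_const)
  then show ?thesis
    unfolding Fbound_def[abs_def] by (intro concave_on_min) (auto simp: concave_on_const)
qed

lemma Fbound_antimono: "antimono_on S (Fbound \<theta>)"
proof (rule monotone_onI)
  fix x y :: real assume "x \<le> y"
  have "sqrt (1 - y) / (sqrt 2 * (sin \<theta>)\<^sup>2) \<le> sqrt (1 - x) / (sqrt 2 * (sin \<theta>)\<^sup>2)"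
    "(1 - y) / (sin \<theta>)\<^sup>2 \<le> (1 - x) / (sin \<theta>)\<^sup>2"
    using \<open>x \<le> y\<close> by (auto intro: divide_right_mono)
  then show "Fbound \<theta> y \<le> Fbound \<theta> x"
    unfolding Fbound_def by linarith
qed

section \<open>The real inequalities behind the bound\<close>

lemma le_AM_GM_of_forall_pos:
  fixes a b c x :: real
  assumes a: "0 \<le> a" and b: "0 \<le> b" and le: "\<And>t. 0 < t \<Longrightarrow> x \<le> a * t + b / t + c"
  shows "x \<le> 2 * sqrt (a * b) + c"
proof (cases "0 < a \<and> 0 < b")
  case True
  define t where "t = sqrt b / sqrt a"
  have "0 < t" using True by (simp add: t_def)
  moreover have "a * t = sqrt (a * b)" "b / t = sqrt (a * b)"
    using True a b by (simp_all add: t_def real_sqrt_mult field_simps)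
  ultimately show ?thesis using le[of t] by simp
next
  case False
  have "x \<le> c"
  proof (rule ccontr)
    assume "\<not> x \<le> c"
    then have d: "0 < x - c" by simp
    show False
    proof (cases "a = 0")
      case True
      define t where "t = (b + 1) / (x - c)"
      have "0 < t" using d b by (simp add: t_def)
      have "b / t = b * (x - c) / (b + 1)" by (simp add: t_def)
      also have "\<dots> < x - c" using d b by (simp add: divide_less_eq)
      finally show False using le[OF \<open>0 < t\<close>] True by simp
    next
      case False
      then have "0 < a" "b = 0" using a b \<open>\<not> (0 < a \<and> 0 < b)\<close> by auto
      define t where "t = (x - c) / (2 * a)"
      have "0 < t" using d \<open>0 < a\<close> by (simp add: t_def)
      moreover have "a * t < x - c" using d \<open>0 < a\<close> by (simp add: t_def)
      ultimately show False using le[of t] \<open>b = 0\<close> by simp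
    qed
  qed
  moreover have "0 \<le> sqrt (a * b)" using a b by simp
  ultimately show ?thesis by linarith
qed

text \<open>x0, y0, x1, y1 are the fidelities of Bob's conditional states X0, Y0, X1, Y1 of
  bias_le_Fbound with the states announced with them, e0, e1, e2, e3 are the weights outside these
  states, P is the probability of y = c and \<delta> = 1 - E(f).\<close>

lemma sum_of_tradeoffs_le:
  fixes s t x0 y0 x1 y1 e0 e1 e2 e3 P \<delta> :: real
  assumes s: "0 < s" "s \<le> 1" and t: "0 < t"
    and nn: "0 \<le> x0" "0 \<le> y0" "0 \<le> x1" "0 \<le> y1" "0 \<le> e0" "0 \<le> e1" "0 \<le> e2" "0 \<le> e3"
    and tr0: "x0 + e0 + y0 + e1 = 1" and tr1: "x1 + e2 + y1 + e3 = 1"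
    and H1: "s * (x0 - y1) \<le> s * t * (x0 + y1) + (1 - s) * (e0 + e3) / t + (1 - s) * e3 + e2"
    and H2: "s * (x1 - y0) \<le> s * t * (x1 + y0) + (1 - s) * (e2 + e1) / t + (1 - s) * e1 + e0"
    and P: "2 * P = x0 + e0 + x1 + e2" and d: "2 * \<delta> = e0 + e1 + e2 + e3"
  shows "s * (2 * P - 1) \<le> s * t + (1 - s) * \<delta> / t + 2 * \<delta>"
proof -
  have "2 * (2 * P - 1) = (x0 - y1) + (x1 - y0) + (e0 + e2) - (e1 + e3)"
    using P tr0 tr1 by argo
  then have "2 * (s * (2 * P - 1)) = s * (x0 - y1) + s * (x1 - y0) + s * (e0 + e2) - s * (e1 + e3)"
    by (metis mult.left_commute right_diff_distrib distrib_left)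
  moreover have "s * t * (x0 + y1) + s * t * (x1 + y0) \<le> 2 * (s * t)"
  proof -
    have "x0 + y1 + (x1 + y0) \<le> 2" using tr0 tr1 nn by linarith
    then have "s * t * (x0 + y1 + (x1 + y0)) \<le> s * t * 2" using s t by (intro mult_left_mono) auto
    then show ?thesis by (simp add: distrib_left mult.commute)
  qed
  moreover have "(1 - s) * (e0 + e3) / t + (1 - s) * (e2 + e1) / t = 2 * ((1 - s) * \<delta> / t)"
    using d by (simp add: add_divide_distrib[symmetric] distrib_left[symmetric])
  moreover have "s * (e0 + e2) \<le> e0 + e2" "0 \<le> s * (e1 + e3)"
    using s nn by (simp_all add: mult_left_le_one_le)
  moreover have "(1 - s) * e3 + (1 - s) * e1 \<le> e1 + e3"
    using s nn by (simp add: algebra_simps)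
  ultimately show ?thesis using H1 H2 d nn by linarith
qed

lemma bias_le_of_tradeoff:
  fixes s P \<delta> :: real
  assumes s: "0 < s" "s \<le> 1" and \<delta>: "0 \<le> \<delta>" and P: "P \<le> 1"
    and tradeoff: "\<And>t. 0 < t \<Longrightarrow> s * (2 * P - 1) \<le> s * t + (1 - s) * \<delta> / t + 2 * \<delta>"
  shows "P \<le> min (1/2 + sqrt \<delta> / (sqrt 2 * s) + \<delta> / s) 1"
proof -
  have "s * (1 - s) = 1 / 4 - (s - 1 / 2)\<^sup>2" by (simp add: power2_eq_square algebra_simps)
  then have "sqrt (s * (1 - s)) \<le> sqrt ((1 / 2)\<^sup>2)"
    by (intro real_sqrt_le_mono) (simp add: power2_eq_square)
  then have "2 * sqrt (s * (1 - s)) * sqrt \<delta> \<le> 1 * sqrt \<delta>"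
    using \<delta> by (intro mult_right_mono) auto
  then have "2 * sqrt (s * ((1 - s) * \<delta>)) \<le> sqrt \<delta>"
    by (simp add: real_sqrt_mult mult.assoc)
  also have "\<dots> \<le> sqrt 2 * sqrt \<delta>"
    using \<delta> by (simp add: mult_le_cancel_right1)
  finally have "2 * sqrt (s * ((1 - s) * \<delta>)) \<le> sqrt 2 * sqrt \<delta>" .
  moreover have "s * (2 * P - 1) \<le> 2 * sqrt (s * ((1 - s) * \<delta>)) + 2 * \<delta>"
    using s \<delta> by (intro le_AM_GM_of_forall_pos tradeoff) auto
  moreover have "s * (2 * (sqrt \<delta> / (sqrt 2 * s) + \<delta> / s)) = sqrt 2 * sqrt \<delta> + 2 * \<delta>"
  proof -
    have "s * (2 * (sqrt \<delta> / (sqrt 2 * s) + \<delta> / s)) = 2 / sqrt 2 * sqrt \<delta> + 2 * \<delta>"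
      using s by (simp add: distrib_left)
    also have "2 / sqrt 2 = sqrt 2" using real_div_sqrt[of 2] by simp
    finally show ?thesis .
  qed
  ultimately have "s * (2 * P - 1) \<le> s * (2 * (sqrt \<delta> / (sqrt 2 * s) + \<delta> / s))"
    by linarith
  then show ?thesis using s P by simp
qed

section \<open>Inner product and quadratic forms\<close>

lemma cinner_add_left: "cinner (u + v) w = cinner u w + cinner v w"
  by (simp add: cinner_def sum.distrib algebra_simps)

lemma cinner_add_right: "cinner w (u + v) = cinner w u + cinner w v"
  by (simp add: cinner_def sum.distrib algebra_simps)

lemma cinner_diff_left: "cinner (u - v) w = cinner u w - cinner v w"
  by (simp add: cinner_def sum_subtractf algebra_simps)

lemma cinner_diff_right: "cinner w (u - v) = cinner w u - cinner w v"
  by (simp add: cinner_def sum_subtractf algebra_simps)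

lemma cinner_smult_left: "cinner (c *s u) w = cnj c * cinner u w"
  by (simp add: cinner_def sum_distrib_left algebra_simps)

lemma cinner_smult_right: "cinner w (c *s u) = c * cinner w u"
  by (simp add: cinner_def sum_distrib_left algebra_simps)

lemma cnj_cinner: "cnj (cinner u v) = cinner v u"
  by (simp add: cinner_def mult.commute)

lemma cmod_cinner_commute: "cmod (cinner u v) = cmod (cinner v u)"
  by (metis cnj_cinner complex_mod_cnj)

lemma cinner_axis_left: "cinner (axis i c) v = cnj c * v $ i"
proof -
  have "(\<Sum>k\<in>UNIV. cnj (axis i c $ k) * v $ k) = (\<Sum>k\<in>UNIV. if k = i then cnj c * v $ i else 0)"
    by (intro sum.cong) (auto simp: axis_def)
  then show ?thesis unfolding cinner_def by simp
qed

lemma cinner_self: "cinner v v = of_real (\<Sum>i\<in>UNIV. (cmod (v $ i))\<^sup>2)"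
proof -
  have "cinner v v = (\<Sum>i\<in>UNIV. of_real ((cmod (v $ i))\<^sup>2))"
    unfolding cinner_def by (intro sum.cong refl) (metis complex_norm_square mult.commute)
  then show ?thesis by (simp only: of_real_sum)
qed

lemma cinner_self_real: "cinner v v = of_real (Re (cinner v v))"
  by (simp add: cinner_self)

lemma cinner_self_nonneg: "0 \<le> Re (cinner v v)"
  by (simp add: cinner_self sum_nonneg)

lemma cinner_self_eq_0: "cinner v v = 0 \<Longrightarrow> v = 0"
proof -
  assume "cinner v v = 0"
  then have "(\<Sum>i\<in>UNIV. (cmod (v $ i))\<^sup>2) = 0" unfolding cinner_self by (simp only: of_real_eq_0_iff)
  then have "\<forall>i\<in>UNIV. (cmod (v $ i))\<^sup>2 = 0" by (subst (asm) sum_nonneg_eq_0_iff) auto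
  then show "v = 0" by (simp add: vec_eq_iff)
qed

lemma cinner_Cauchy_Schwarz: "(cmod (cinner u v))\<^sup>2 \<le> Re (cinner u u) * Re (cinner v v)"
proof (cases "u = 0")
  case True
  then show ?thesis by (simp add: cinner_def)
next
  case False
  define r where "r = Re (cinner u u)"
  have ru: "cinner u u = of_real r" unfolding r_def by (rule cinner_self_real)
  have r: "0 < r" using False cinner_self_eq_0 cinner_self_nonneg[of u] ru r_def
    by (metis less_eq_real_def of_real_0)
  define c where "c = cinner u v"
  have vu: "cinner v u = cnj c" unfolding c_def by (simp add: cnj_cinner)
  define w where "w = v - (c / of_real r) *s u"
  have "cinner w w = cinner v v - c * cnj c / of_real r"
    unfolding w_def using r
    by (simp add: cinner_diff_left cinner_diff_right cinner_smult_left cinner_smult_right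
        vu ru c_def[symmetric] field_simps power2_eq_square)
  also have "c * cnj c / of_real r = of_real ((cmod c)\<^sup>2 / r)"
    by (simp only: of_real_divide complex_norm_square)
  finally have "Re (cinner w w) = Re (cinner v v) - (cmod c)\<^sup>2 / r" by simp
  then have "(cmod c)\<^sup>2 / r \<le> Re (cinner v v)" using cinner_self_nonneg[of w] by linarith
  then show ?thesis using r unfolding c_def r_def by (simp add: divide_le_eq mult.commute)
qed

definition qform :: "complex^'n^'n \<Rightarrow> complex^'n \<Rightarrow> complex" where
  "qform A v = cinner v (A *v v)"

definition hermitian :: "complex^'n^'n \<Rightarrow> bool" where
  "hermitian A \<longleftrightarrow> (\<forall>i j. A $ j $ i = cnj (A $ i $ j))"

lemma proj_mult_vector: "proj w *v v = cinner w v *s w"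
  by (simp add: vec_eq_iff matrix_vector_mult_def proj_def cinner_def sum_distrib_left algebra_simps)

lemma scaleR_matrix_vector_mult: "(r *\<^sub>R A) *v v = of_real r *s (A *v (v :: complex^'n))"
  by (simp add: vec_eq_iff matrix_vector_mult_def sum_distrib_left mult.assoc)
    (simp add: scaleR_conv_of_real)

lemma matrix_axis_entry: "(A *v axis j c) $ i = A $ i $ j * c"
proof -
  have "(\<Sum>k\<in>UNIV. A $ i $ k * axis j c $ k) = (\<Sum>k\<in>UNIV. if k = j then A $ i $ j * c else 0)"
    by (intro sum.cong) (auto simp: axis_def)
  then show ?thesis unfolding matrix_vector_mult_def by simp
qed

lemma cinner_axis_matrix_axis: "cinner (axis i 1) (A *v axis j 1) = A $ i $ j"
  by (simp add: cinner_axis_left matrix_axis_entry)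

lemma qform_add_matrix: "qform (A + B) v = qform A v + qform B v"
  by (simp add: qform_def matrix_vector_mult_add_rdistrib cinner_add_right)

lemma qform_diff_matrix: "qform (A - B) v = qform A v - qform B v"
  by (simp add: qform_def matrix_vector_mult_diff_rdistrib cinner_diff_right)

lemma qform_scaleR_matrix: "qform (r *\<^sub>R A) v = of_real r * qform A v"
  by (simp add: qform_def scaleR_matrix_vector_mult cinner_smult_right)

lemma qform_mat1: "qform (mat 1) v = cinner v v"
  by (simp add: qform_def)

lemma qform_proj: "qform (proj w) v = of_real ((cmod (cinner w v))\<^sup>2)"
  by (simp add: qform_def proj_mult_vector cinner_smult_right cnj_cinner[of w v, symmetric])
    (simp add: complex_norm_square[symmetric])

lemma qform_smult: "qform A (c *s u) = cnj c * c * qform A u"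
  by (simp add: qform_def vector_scalar_commute cinner_smult_left cinner_smult_right)

lemma qform_add: "qform A (u + w) = qform A u + qform A w + cinner u (A *v w) + cinner w (A *v u)"
  by (simp add: qform_def matrix_vector_right_distrib cinner_add_left cinner_add_right)

lemma qform_diff: "qform A (u - w) = qform A u + qform A w - cinner u (A *v w) - cinner w (A *v u)"
  by (simp add: qform_def matrix_vector_mult_diff_distrib cinner_diff_left cinner_diff_right)

lemma hermitian_cnj_entry: "hermitian A \<Longrightarrow> cnj (A $ i $ j) = A $ j $ i"
  unfolding hermitian_def by metis

lemma hermitian_cinner_swap:
  assumes "hermitian A"
  shows "cinner u (A *v v) = cnj (cinner v (A *v u))"
proof -
  note h = hermitian_cnj_entry[OF assms]
  have "cnj (cinner v (A *v u)) = (\<Sum>i\<in>UNIV. \<Sum>j\<in>UNIV. v $ i * (cnj (A $ i $ j) * cnj (u $ j)))"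
    unfolding cinner_def matrix_vector_mult_def by (simp add: sum_distrib_left)
  also have "\<dots> = (\<Sum>j\<in>UNIV. \<Sum>i\<in>UNIV. cnj (u $ j) * (A $ j $ i * v $ i))"
    unfolding h by (subst sum.swap) (simp only: mult.commute mult.left_commute)
  also have "\<dots> = cinner u (A *v v)"
    unfolding cinner_def matrix_vector_mult_def by (simp add: sum_distrib_left)
  finally show ?thesis by simp
qed

lemma hermitian_qform_add:
  assumes "hermitian A"
  shows "Re (qform A (u + w)) = Re (qform A u) + Re (qform A w) + 2 * Re (cinner w (A *v u))"
  using hermitian_cinner_swap[OF assms, of u w] by (simp add: qform_add)

lemma hermitian_qform_diff:
  assumes "hermitian A"
  shows "Re (qform A (u - w)) = Re (qform A u) + Re (qform A w) - 2 * Re (cinner w (A *v u))"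
  using hermitian_cinner_swap[OF assms, of u w] by (simp add: qform_diff)

lemma psd_iff_qform: "psd A \<longleftrightarrow> (\<forall>v. qform A v \<in> \<real> \<and> 0 \<le> Re (qform A v))"
  by (simp add: psd_def qform_def)

lemma psd_qform_real: "psd A \<Longrightarrow> qform A v = of_real (Re (qform A v))"
  unfolding psd_iff_qform by (metis Reals_cases Re_complex_of_real)

lemma psd_qform_nonneg: "psd A \<Longrightarrow> 0 \<le> Re (qform A v)"
  unfolding psd_iff_qform by blast

lemma psdI:
  assumes "\<And>v. qform A v = of_real (f v)" and "\<And>v. 0 \<le> f v"
  shows "psd A"
  unfolding psd_iff_qform using assms by (metis Re_complex_of_real Reals_of_real)

lemma psd_imp_hermitian:
  fixes A :: "complex^'n^'n"
  assumes "psd A"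
  shows "hermitian A"
  unfolding hermitian_def
proof (intro allI)
  fix i j
  let ?ei = "axis i 1 :: complex^'n" and ?ej = "axis j 1 :: complex^'n"
  have real: "Im (qform A v) = 0" for v using psd_qform_real[OF assms, of v] by (metis Im_complex_of_real)
  have "qform A (?ei + ?ej) = qform A ?ei + qform A ?ej + A $ i $ j + A $ j $ i"
    by (simp add: qform_add cinner_axis_matrix_axis)
  then have im: "Im (A $ i $ j + A $ j $ i) = 0" using real[of "?ei + ?ej"] real[of ?ei] real[of ?ej] by simp
  have "qform A (?ei + \<i> *s ?ej) = qform A ?ei + qform A ?ej + \<i> * A $ i $ j - \<i> * A $ j $ i"
    by (simp add: qform_add qform_smult cinner_axis_matrix_axis vector_scalar_commute
        cinner_smult_left cinner_smult_right)
  then have re: "Re (A $ i $ j - A $ j $ i) = 0"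
    using real[of "?ei + \<i> *s ?ej"] real[of ?ei] real[of ?ej] by simp
  show "A $ j $ i = cnj (A $ i $ j)" using im re by (simp add: complex_eq_iff)
qed

lemma psd_diag: "psd A \<Longrightarrow> A $ i $ i = of_real (Re (A $ i $ i)) \<and> 0 \<le> Re (A $ i $ i)"
  using psd_qform_real[of A "axis i 1"] psd_qform_nonneg[of A "axis i 1"]
  by (simp add: qform_def cinner_axis_matrix_axis)

lemma psd_mat1_minus_proj:
  assumes "cinner \<psi> \<psi> = 1"
  shows "psd (mat 1 - proj \<psi>)"
proof (rule psdI)
  fix v
  show "qform (mat 1 - proj \<psi>) v = of_real (Re (cinner v v) - (cmod (cinner \<psi> v))\<^sup>2)"
    by (simp add: qform_diff_matrix qform_mat1 qform_proj) (metis cinner_self_real)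
  show "0 \<le> Re (cinner v v) - (cmod (cinner \<psi> v))\<^sup>2"
    using cinner_Cauchy_Schwarz[of \<psi> v] assms by simp
qed

section \<open>Positive matrices as sums of projectors\<close>

definition supported_on :: "'n set \<Rightarrow> complex^'n^'n \<Rightarrow> bool" where
  "supported_on S A \<longleftrightarrow> (\<forall>i j. A $ i $ j \<noteq> 0 \<longrightarrow> i \<in> S \<and> j \<in> S)"

lemma psd_diag_eq_0_imp_row_eq_0:
  assumes A: "psd A" and diag: "A $ i $ i = 0"
  shows "A $ i $ j = 0"
proof (rule ccontr)
  assume nz: "A $ i $ j \<noteq> 0"
  let ?z = "A $ i $ j" and ?q = "Re (qform A (axis j 1))"
  define t where "t = (?q + 1) / (2 * (cmod ?z)\<^sup>2)"
  define l where "l = - (of_real t * ?z)"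
  have "0 \<le> Re (qform A (axis j 1 + l *s axis i 1))" by (rule psd_qform_nonneg[OF A])
  also have "\<dots> = ?q + Re (qform A (l *s axis i 1)) + 2 * Re (cinner (l *s axis i 1) (A *v axis j 1))"
    by (rule hermitian_qform_add[OF psd_imp_hermitian[OF A]])
  also have "qform A (l *s axis i 1) = 0"
    unfolding qform_smult by (simp add: qform_def cinner_axis_matrix_axis diag)
  also have "Re (cinner (l *s axis i 1) (A *v axis j 1)) = - t * (cmod ?z)\<^sup>2"
    unfolding cinner_smult_left cinner_axis_matrix_axis l_def
    by (simp add: cmod_power2 algebra_simps) (simp add: power2_eq_square)
  also have "2 * (- t * (cmod ?z)\<^sup>2) = - (?q + 1)"
    using nz by (simp add: t_def field_simps)
  finally show False by simp
qed

definition cholesky_column :: "complex^'n^'n \<Rightarrow> 'n \<Rightarrow> complex^'n" where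
  "cholesky_column A i = (\<chi> j. A $ j $ i / of_real (sqrt (Re (A $ i $ i))))"

lemma psd_diag_sqrt:
  assumes A: "psd A" and nz: "A $ i $ i \<noteq> 0"
  shows "0 < sqrt (Re (A $ i $ i))"
    and "of_real (sqrt (Re (A $ i $ i))) * of_real (sqrt (Re (A $ i $ i))) = A $ i $ i"
proof -
  have "A $ i $ i = of_real (Re (A $ i $ i))" "0 \<le> Re (A $ i $ i)" using psd_diag[OF A, of i] by auto
  moreover from this nz have "0 < Re (A $ i $ i)" by (metis less_eq_real_def of_real_0)
  ultimately show "0 < sqrt (Re (A $ i $ i))"
    and "of_real (sqrt (Re (A $ i $ i))) * of_real (sqrt (Re (A $ i $ i))) = A $ i $ i"
    by (simp_all flip: of_real_mult)
qed

lemma cholesky_column_entry: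
  assumes A: "psd A" and nz: "A $ i $ i \<noteq> 0"
  shows "(A - proj (cholesky_column A i)) $ a $ b = A $ a $ b - A $ a $ i * A $ i $ b / A $ i $ i"
proof -
  define r where "r = sqrt (Re (A $ i $ i))"
  have "(A - proj (cholesky_column A i)) $ a $ b
      = A $ a $ b - (A $ a $ i / of_real r) * (cnj (A $ b $ i) / of_real r)"
    by (simp add: cholesky_column_def proj_def r_def)
  also have "\<dots> = A $ a $ b - A $ a $ i * A $ i $ b / (of_real r * of_real r)"
    by (simp add: hermitian_cnj_entry[OF psd_imp_hermitian[OF A]])
  finally show ?thesis unfolding r_def psd_diag_sqrt(2)[OF A nz] .
qed

lemma psd_minus_proj_cholesky_column:
  assumes A: "psd A" and nz: "A $ i $ i \<noteq> 0"
  shows "psd (A - proj (cholesky_column A i))"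
proof (rule psdI)
  fix v
  define r where "r = sqrt (Re (A $ i $ i))"
  note r = psd_diag_sqrt[OF A nz, folded r_def]
  define \<mu> where "\<mu> = cinner (cholesky_column A i) v"
  define l where "l = - \<mu> / of_real r"
  have "(A *v v) $ i = (\<Sum>k\<in>UNIV. cnj (A $ k $ i) * v $ k)"
    by (simp add: matrix_vector_mult_def hermitian_cnj_entry[OF psd_imp_hermitian[OF A]])
  also have "\<dots> = of_real r * \<mu>"
    using r by (simp add: \<mu>_def cinner_def cholesky_column_def sum_distrib_left flip: r_def)
  finally have Av: "(A *v v) $ i = of_real r * \<mu>" .
  have "qform A (l *s axis i 1) = cnj l * l * A $ i $ i"
    unfolding qform_smult by (simp add: qform_def cinner_axis_matrix_axis)
  also have "\<dots> = \<mu> * cnj \<mu>"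
    using r by (simp add: l_def flip: r(2))
  finally have q: "qform A (l *s axis i 1) = of_real ((cmod \<mu>)\<^sup>2)"
    by (simp only: complex_norm_square)
  have c: "cinner (l *s axis i 1) (A *v v) = - of_real ((cmod \<mu>)\<^sup>2)"
    using r unfolding cinner_smult_left cinner_axis_left Av complex_norm_square
    by (simp add: l_def)
  \<comment> \<open>l minimises the quadratic form on the line through v in the direction of the i-th axis\<close>
  have "Re (qform A (v + l *s axis i 1)) = Re (qform A v) - (cmod \<mu>)\<^sup>2"
    using hermitian_qform_add[OF psd_imp_hermitian[OF A], of v "l *s axis i 1"] q c by simp
  moreover have "0 \<le> Re (qform A (v + l *s axis i 1))" by (rule psd_qform_nonneg[OF A])
  ultimately show "0 \<le> Re (qform A v) - (cmod \<mu>)\<^sup>2" by simp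
  have "qform (A - proj (cholesky_column A i)) v = qform A v - of_real ((cmod \<mu>)\<^sup>2)"
    by (simp add: qform_diff_matrix qform_proj \<mu>_def)
  then show "qform (A - proj (cholesky_column A i)) v = of_real (Re (qform A v) - (cmod \<mu>)\<^sup>2)"
    by (metis of_real_diff psd_qform_real[OF A])
qed

lemma psd_split_proj:
  fixes A :: "complex^'n^'n"
  assumes A: "psd A" and supp: "supported_on (insert i S) A"
  obtains A' w where "psd A'" "supported_on S A'" "A = A' + proj w"
proof (cases "A $ i $ i = 0")
  case True
  have row: "A $ i $ j = 0" for j using psd_diag_eq_0_imp_row_eq_0[OF A True] .
  then have col: "A $ j $ i = 0" for j
    using hermitian_cnj_entry[OF psd_imp_hermitian[OF A], of i j] by simp
  have "supported_on S A" using supp row col unfolding supported_on_def by blast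
  moreover have "A = A + proj 0" by (simp add: proj_def vec_eq_iff)
  ultimately show ?thesis using that A by blast
next
  case False
  have "supported_on S (A - proj (cholesky_column A i))"
    unfolding supported_on_def cholesky_column_entry[OF A False]
  proof (intro allI impI)
    fix a b assume nz: "A $ a $ b - A $ a $ i * A $ i $ b / A $ i $ i \<noteq> 0"
    then have "a \<noteq> i" "b \<noteq> i" using False by auto
    moreover have "a \<in> insert i S"
      using nz supp unfolding supported_on_def by (metis diff_zero div_0 mult_zero_left)
    moreover have "b \<in> insert i S"
      using nz supp unfolding supported_on_def by (metis diff_zero div_0 mult_zero_right)
    ultimately show "a \<in> S \<and> b \<in> S" by simp
  qed
  then show ?thesis using that psd_minus_proj_cholesky_column[OF A False] by fastforce
qed

lemma psd_eq_sum_list_proj: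
  fixes A :: "complex^'n^'n"
  assumes "psd A"
  obtains W where "A = sum_list (map proj W)"
proof -
  have "\<exists>W. A = sum_list (map proj W)" if "psd A" "supported_on S A" "finite S" for S A
    using that(3,1,2)
  proof (induction S arbitrary: A rule: finite_induct)
    case empty
    then have "A = 0" by (auto simp: supported_on_def vec_eq_iff)
    then show ?case by (metis list.map(1) sum_list.Nil)
  next
    case (insert i S)
    then obtain A' w where "psd A'" "supported_on S A'" "A = A' + proj w"
      by (metis psd_split_proj)
    with insert.IH show ?case by (metis add.commute list.map(2) sum_list.Cons)
  qed
  then show ?thesis using that assms by (auto simp: supported_on_def)
qed

lemma trace_eq_Determinants_trace: "trace = Determinants.trace"
  by (simp add: fun_eq_iff trace_def Determinants.trace_def)

lemma trace_mult_commute: "trace (A ** B) = trace (B ** A)"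
  unfolding trace_eq_Determinants_trace by (rule trace_mul_sym)

lemma trace_proj_mult: "trace (proj w ** B) = qform B w"
proof -
  have "trace (proj w ** B) = (\<Sum>i\<in>UNIV. \<Sum>j\<in>UNIV. w $ i * cnj (w $ j) * B $ j $ i)"
    by (simp add: trace_def matrix_matrix_mult_def proj_def)
  also have "\<dots> = (\<Sum>j\<in>UNIV. \<Sum>i\<in>UNIV. cnj (w $ j) * (B $ j $ i * w $ i))"
    by (subst sum.swap) (simp add: mult.commute mult.left_commute)
  also have "\<dots> = qform B w"
    by (simp add: qform_def cinner_def matrix_vector_mult_def sum_distrib_left)
  finally show ?thesis .
qed

lemma trace_mult_proj: "trace (A ** proj w) = qform A w"
  by (simp add: trace_mult_commute[of A] trace_proj_mult)

lemma trace_mult_diff_right: "trace (C ** (A - B)) = trace (C ** A) - trace (C ** B)"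
  by (simp add: trace_def matrix_matrix_mult_def right_diff_distrib sum_subtractf)

lemma trace_mult_scaleR_right: "trace (C ** (r *\<^sub>R A)) = of_real r * trace (C ** A)"
  by (simp add: trace_def matrix_matrix_mult_def sum_distrib_left mult.left_commute)
    (simp add: scaleR_conv_of_real)

lemma trace_mult_add_left: "trace ((A + B) ** C) = trace (A ** C) + trace (B ** C)"
  by (simp add: trace_def matrix_matrix_mult_def distrib_right sum.distrib)

lemma trace_mult_psd:
  fixes A B :: "complex^'n^'n"
  assumes "psd A" "psd B"
  shows "trace (A ** B) \<in> \<real>" and "0 \<le> Re (trace (A ** B))"
proof -
  obtain W where W: "A = sum_list (map proj W)" using psd_eq_sum_list_proj[OF assms(1)] .
  have "trace (sum_list (map proj W) ** B) \<in> \<real> \<and> 0 \<le> Re (trace (sum_list (map proj W) ** B))"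
  proof (induction W)
    case Nil
    then show ?case by (simp add: trace_def)
  next
    case (Cons w W)
    then show ?case
      using psd_qform_real[OF assms(2), of w] psd_qform_nonneg[OF assms(2), of w]
      by (simp add: trace_mult_add_left trace_proj_mult) (metis Reals_add Reals_of_real)
  qed
  then show "trace (A ** B) \<in> \<real>" "0 \<le> Re (trace (A ** B))" unfolding W by auto
qed

section \<open>Partial trace\<close>

text \<open>ptrace1 \<rho> M = Tr_A (\<rho> (M \<otimes> I)), Bob's unnormalised state after Alice observes the
  effect M.\<close>

definition ptrace1 :: "complex^('a::finite \<times> 'b::finite)^('a \<times> 'b) \<Rightarrow> complex^'a^'a \<Rightarrow> complex^'b^'b" where
  "ptrace1 \<rho> M = (\<chi> j j'. \<Sum>i\<in>UNIV. \<Sum>i'\<in>UNIV. \<rho> $ (i, j) $ (i', j') * M $ i' $ i)"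

lemma sum_UNIV_prod:
  "(\<Sum>p\<in>(UNIV :: ('a::finite \<times> 'b::finite) set). f p) = (\<Sum>i\<in>UNIV. \<Sum>j\<in>UNIV. f (i, j))"
  by (simp add: sum.cartesian_product' flip: UNIV_Times_UNIV)

lemma trace_mult_kron: "trace (\<rho> ** kron M K) = trace (ptrace1 \<rho> M ** K)"
proof -
  let ?f = "\<lambda>i j i' j'. \<rho> $ (i, j) $ (i', j') * M $ i' $ i * K $ j' $ j"
  have "trace (\<rho> ** kron M K) = (\<Sum>i\<in>UNIV. \<Sum>j\<in>UNIV. \<Sum>i'\<in>UNIV. \<Sum>j'\<in>UNIV. ?f i j i' j')"
    unfolding trace_def matrix_matrix_mult_def kron_def sum_UNIV_prod by (simp add: mult.assoc)
  also have "\<dots> = (\<Sum>j\<in>UNIV. \<Sum>i\<in>UNIV. \<Sum>i'\<in>UNIV. \<Sum>j'\<in>UNIV. ?f i j i' j')"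
    by (rule sum.swap)
  also have "\<dots> = (\<Sum>j\<in>UNIV. \<Sum>i\<in>UNIV. \<Sum>j'\<in>UNIV. \<Sum>i'\<in>UNIV. ?f i j i' j')"
    by (intro sum.cong refl) (rule sum.swap)
  also have "\<dots> = (\<Sum>j\<in>UNIV. \<Sum>j'\<in>UNIV. \<Sum>i\<in>UNIV. \<Sum>i'\<in>UNIV. ?f i j i' j')"
    by (intro sum.cong refl) (rule sum.swap)
  also have "\<dots> = trace (ptrace1 \<rho> M ** K)"
    by (simp add: trace_def matrix_matrix_mult_def ptrace1_def sum_distrib_right)
  finally show ?thesis .
qed

lemma ptrace1_add: "ptrace1 \<rho> (M + N) = ptrace1 \<rho> M + ptrace1 \<rho> N"
  by (simp add: ptrace1_def vec_eq_iff distrib_left sum.distrib)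

lemma kron_mat1_mat1: "kron (mat 1) (mat 1) = mat 1"
  by (auto simp: kron_def mat_def vec_eq_iff prod_eq_iff)

lemma trace_ptrace1_mat1: "trace (ptrace1 \<rho> (mat 1)) = trace \<rho>"
  using trace_mult_kron[of \<rho> "mat 1" "mat 1"] by (simp add: kron_mat1_mat1)

lemma qform_kron_proj:
  "qform (kron M (proj v)) u = qform M (\<chi> i. \<Sum>j\<in>UNIV. cnj (v $ j) * u $ (i, j))"
proof -
  let ?g = "\<lambda>i j i' j'. cnj (u $ (i, j)) * (M $ i $ i' * (v $ j * (cnj (v $ j') * u $ (i', j'))))"
  have "qform (kron M (proj v)) u = (\<Sum>i\<in>UNIV. \<Sum>j\<in>UNIV. \<Sum>i'\<in>UNIV. \<Sum>j'\<in>UNIV. ?g i j i' j')"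
    by (simp add: qform_def cinner_def matrix_vector_mult_def kron_def proj_def sum_UNIV_prod
        sum_distrib_left mult.assoc)
  also have "\<dots> = (\<Sum>i\<in>UNIV. \<Sum>i'\<in>UNIV. \<Sum>j\<in>UNIV. \<Sum>j'\<in>UNIV. ?g i j i' j')"
    by (intro sum.cong refl) (rule sum.swap)
  also have "\<dots> = (\<Sum>i\<in>UNIV. \<Sum>i'\<in>UNIV. \<Sum>j'\<in>UNIV. \<Sum>j\<in>UNIV. ?g i j i' j')"
    by (rule sum.cong[OF refl], rule sum.cong[OF refl], rule sum.swap)
  also have "\<dots> = qform M (\<chi> i. \<Sum>j\<in>UNIV. cnj (v $ j) * u $ (i, j))"
    by (simp add: qform_def cinner_def matrix_vector_mult_def sum_distrib_left sum_distrib_right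
        mult.assoc mult.left_commute)
  finally show ?thesis .
qed

lemma psd_kron_proj: "psd M \<Longrightarrow> psd (kron M (proj v))"
  unfolding psd_iff_qform qform_kron_proj by blast

lemma psd_ptrace1:
  assumes "psd \<rho>" "psd M"
  shows "psd (ptrace1 \<rho> M)"
  unfolding psd_iff_qform
proof
  fix v
  have "qform (ptrace1 \<rho> M) v = trace (\<rho> ** kron M (proj v))"
    by (simp add: trace_mult_kron trace_mult_proj)
  then show "qform (ptrace1 \<rho> M) v \<in> \<real> \<and> 0 \<le> Re (qform (ptrace1 \<rho> M) v)"
    using trace_mult_psd[OF assms(1) psd_kron_proj[OF assms(2)]] by simp
qed

lemma prob_kron_proj: "prob \<rho> (kron M (proj \<psi>)) = Re (qform (ptrace1 \<rho> M) \<psi>)"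
  by (simp add: prob_def trace_mult_kron trace_mult_proj)

lemma prob_kron_mat1: "prob \<rho> (kron M (mat 1)) = Re (trace (ptrace1 \<rho> M))"
  by (simp add: prob_def trace_mult_kron)

section \<open>Fidelity estimates\<close>

lemma qform_le_trace:
  assumes X: "psd X" and \<psi>: "cinner \<psi> \<psi> = 1"
  shows "Re (qform X \<psi>) \<le> Re (trace X)"
  using trace_mult_psd(2)[OF X psd_mat1_minus_proj[OF \<psi>]]
  by (simp add: trace_mult_diff_right trace_mult_proj)

lemma psd_scaled_compl_minus_proj:
  assumes \<psi>: "cinner \<psi> \<psi> = 1" and orth: "cinner \<psi> z = 0"
  shows "psd (Re (cinner z z) *\<^sub>R (mat 1 - proj \<psi>) - proj z)"
proof (rule psdI)
  fix v
  define r where "r = Re (cinner z z)"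
  define a where "a = cinner \<psi> v"
  have "qform (r *\<^sub>R (mat 1 - proj \<psi>) - proj z) v
      = of_real r * (cinner v v - of_real ((cmod a)\<^sup>2)) - of_real ((cmod (cinner z v))\<^sup>2)"
    by (simp add: qform_diff_matrix qform_scaleR_matrix qform_mat1 qform_proj a_def)
  then show "qform (r *\<^sub>R (mat 1 - proj \<psi>) - proj z) v
      = of_real (r * (Re (cinner v v) - (cmod a)\<^sup>2) - (cmod (cinner z v))\<^sup>2)"
    by (subst (asm) cinner_self_real) simp
  define v' where "v' = v - a *s \<psi>"
  have "cinner z \<psi> = 0" using orth cnj_cinner[of \<psi> z] by simp
  then have "cinner z v' = cinner z v"
    by (simp add: v'_def cinner_diff_right cinner_smult_right)
  moreover have "Re (cinner v' v') = Re (cinner v v) - (cmod a)\<^sup>2"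
  proof -
    have "cinner v \<psi> = cnj a" by (simp add: a_def cnj_cinner)
    then show ?thesis
      using \<psi>
      by (simp add: v'_def cinner_diff_left cinner_diff_right cinner_smult_left cinner_smult_right
          a_def[symmetric]) (simp add: cmod_power2, simp add: power2_eq_square)
  qed
  ultimately show "0 \<le> r * (Re (cinner v v) - (cmod a)\<^sup>2) - (cmod (cinner z v))\<^sup>2"
    using cinner_Cauchy_Schwarz[of z v'] by (simp add: r_def)
qed

lemma qform_orthogonal_le:
  assumes X: "psd X" and \<psi>: "cinner \<psi> \<psi> = 1" and orth: "cinner \<psi> z = 0"
  shows "Re (qform X z) \<le> Re (cinner z z) * (Re (trace X) - Re (qform X \<psi>))"
  using trace_mult_psd(2)[OF X psd_scaled_compl_minus_proj[OF \<psi> orth]]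
  by (simp add: trace_mult_diff_right trace_mult_scaleR_right trace_mult_proj)

lemma psd_cross_term_le:
  assumes X: "psd X" and t: "0 < t"
  shows "2 * \<bar>Re (cinner w (X *v u))\<bar> \<le> t * Re (qform X u) + Re (qform X w) / t"
proof -
  have herm: "hermitian X" using psd_imp_hermitian[OF X] .
  define B where "B = Re (cinner w (X *v u))"
  have "Re (qform X (of_real t *s u + w)) = t * t * Re (qform X u) + Re (qform X w) + 2 * t * B"
    "Re (qform X (of_real t *s u - w)) = t * t * Re (qform X u) + Re (qform X w) - 2 * t * B"
    using hermitian_qform_add[OF herm, of "of_real t *s u" w]
      hermitian_qform_diff[OF herm, of "of_real t *s u" w]
    by (simp_all add: qform_smult vector_scalar_commute cinner_smult_right B_def)
  then have "2 * t * \<bar>B\<bar> \<le> t * t * Re (qform X u) + Re (qform X w)"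
    using psd_qform_nonneg[OF X, of "of_real t *s u + w"] psd_qform_nonneg[OF X, of "of_real t *s u - w"]
    by linarith
  then have "t * (2 * \<bar>B\<bar>) \<le> t * (t * Re (qform X u) + Re (qform X w) / t)"
    using t by (simp add: algebra_simps)
  then show ?thesis using t unfolding B_def by simp
qed

lemma psd_qform_add_bounds:
  assumes X: "psd X" and t: "0 < t"
  shows "(1 - t) * Re (qform X u) - Re (qform X w) / t \<le> Re (qform X (u + w))"
    and "Re (qform X (u + w)) \<le> (1 + t) * Re (qform X u) + (1 + 1 / t) * Re (qform X w)"
proof -
  have "Re (qform X (u + w)) = Re (qform X u) + Re (qform X w) + 2 * Re (cinner w (X *v u))"
    by (rule hermitian_qform_add[OF psd_imp_hermitian[OF X]])
  moreover note psd_cross_term_le[OF X t, of w u] psd_qform_nonneg[OF X, of w]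
  moreover have "(1 + 1 / t) * Re (qform X w) = Re (qform X w) + Re (qform X w) / t"
    by (simp add: algebra_simps)
  ultimately show "(1 - t) * Re (qform X u) - Re (qform X w) / t \<le> Re (qform X (u + w))"
    and "Re (qform X (u + w)) \<le> (1 + t) * Re (qform X u) + (1 + 1 / t) * Re (qform X w)"
    by (simp_all add: algebra_simps abs_le_iff)
qed

lemma orthogonal_split:
  assumes \<psi>: "cinner \<psi> \<psi> = 1" and \<psi>': "cinner \<psi>' \<psi>' = 1"
    and s: "s = 1 - (cmod (cinner \<psi>' \<psi>))\<^sup>2"
  obtains \<phi> z where "cinner \<psi>' \<phi> = 0" "cinner \<phi> \<phi> = of_real s"
    "\<phi> = of_real s *s \<psi> + z" "cinner \<psi> z = 0" "Re (cinner z z) = s * (1 - s)"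
proof
  define c where "c = cinner \<psi>' \<psi>"
  define \<phi> where "\<phi> = \<psi> - c *s \<psi>'"
  define z where "z = \<phi> - of_real s *s \<psi>"
  have cc: "c * cnj c = of_real (1 - s)" by (simp add: s c_def flip: complex_norm_square)
  have c': "cinner \<psi> \<psi>' = cnj c" by (simp add: c_def cnj_cinner)
  show orth: "cinner \<psi>' \<phi> = 0"
    by (simp add: \<phi>_def c_def cinner_diff_right cinner_smult_right \<psi>')
  have \<psi>\<phi>: "cinner \<psi> \<phi> = of_real s"
    by (simp add: \<phi>_def cinner_diff_right cinner_smult_right \<psi> c' cc)
  show \<phi>\<phi>: "cinner \<phi> \<phi> = of_real s"
    using orth \<psi>\<phi> by (simp add: \<phi>_def cinner_diff_left cinner_smult_left)
  show "\<phi> = of_real s *s \<psi> + z" by (simp add: z_def)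
  show orth': "cinner \<psi> z = 0"
    by (simp add: z_def cinner_diff_right cinner_smult_right \<psi>\<phi> \<psi>)
  have "cinner \<phi> \<psi> = of_real s" using \<psi>\<phi> cnj_cinner[of \<psi> \<phi>] by simp
  then have "cinner z z = of_real s - of_real s * of_real s"
    using orth' \<phi>\<phi> \<psi> by (simp add: z_def cinner_diff_left cinner_diff_right cinner_smult_left cinner_smult_right)
  also have "\<dots> = of_real (s * (1 - s))" by (simp add: algebra_simps)
  finally show "Re (cinner z z) = s * (1 - s)" by simp
qed

text \<open>The identity A + B = C + D is tested on the component \<phi> of \<psi> orthogonal to \<psi>':
  C hardly sees \<phi>, whereas A and D see it through its component s \<psi>.\<close>

lemma qform_diff_le_of_add_eq:
  fixes A B C D :: "complex^'n^'n"
  assumes psd: "psd A" "psd B" "psd C" "psd D" and sum: "A + B = C + D"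
    and \<psi>: "cinner \<psi> \<psi> = 1" and \<psi>': "cinner \<psi>' \<psi>' = 1"
    and s: "s = 1 - (cmod (cinner \<psi>' \<psi>))\<^sup>2" "0 < s" and t: "0 < t"
  shows "s * (Re (qform A \<psi>) - Re (qform D \<psi>))
    \<le> s * t * (Re (qform A \<psi>) + Re (qform D \<psi>))
      + (1 - s) * ((Re (trace A) - Re (qform A \<psi>)) + (Re (trace D) - Re (qform D \<psi>))) / t
      + (1 - s) * (Re (trace D) - Re (qform D \<psi>)) + (Re (trace C) - Re (qform C \<psi>'))"
proof -
  obtain \<phi> z where orth: "cinner \<psi>' \<phi> = 0" and \<phi>\<phi>: "cinner \<phi> \<phi> = of_real s"
    and split: "\<phi> = of_real s *s \<psi> + z" and orth': "cinner \<psi> z = 0"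
    and zz: "Re (cinner z z) = s * (1 - s)"
    using orthogonal_split[OF \<psi> \<psi>' s(1)] .
  define a where "a = Re (qform A \<psi>)"
  define d where "d = Re (qform D \<psi>)"
  define eA where "eA = Re (trace A) - a"
  define eD where "eD = Re (trace D) - d"
  define eC where "eC = Re (trace C) - Re (qform C \<psi>')"
  have scaled: "Re (qform X (of_real s *s \<psi>)) = s * s * Re (qform X \<psi>)" for X :: "complex^'n^'n"
    by (simp add: qform_smult)
  have "(1 - t) * (s * s * a) - Re (qform A z) / t \<le> Re (qform A \<phi>)"
    using psd_qform_add_bounds(1)[OF psd(1) t, of "of_real s *s \<psi>" z] by (simp add: split scaled a_def)
  moreover have "Re (qform A z) / t \<le> s * (1 - s) * eA / t"
    using qform_orthogonal_le[OF psd(1) \<psi> orth'] t by (simp add: zz eA_def a_def divide_right_mono)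
  moreover have "Re (qform D \<phi>) \<le> (1 + t) * (s * s * d) + (1 + 1 / t) * Re (qform D z)"
    using psd_qform_add_bounds(2)[OF psd(4) t, of "of_real s *s \<psi>" z] by (simp add: split scaled d_def)
  moreover have "(1 + 1 / t) * Re (qform D z) \<le> (1 + 1 / t) * (s * (1 - s) * eD)"
    using qform_orthogonal_le[OF psd(4) \<psi> orth'] t
    by (intro mult_left_mono) (simp_all add: zz eD_def d_def)
  moreover have "Re (qform C \<phi>) \<le> s * eC"
    using qform_orthogonal_le[OF psd(3) \<psi>' orth] \<phi>\<phi> by (simp add: eC_def)
  moreover have "0 \<le> Re (qform B \<phi>)" by (rule psd_qform_nonneg[OF psd(2)])
  moreover have "Re (qform A \<phi>) + Re (qform B \<phi>) = Re (qform C \<phi>) + Re (qform D \<phi>)"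
    using arg_cong[OF sum, of "\<lambda>M. Re (qform M \<phi>)"] by (simp add: qform_add_matrix)
  ultimately have "(1 - t) * (s * s * a) - (1 + t) * (s * s * d)
      \<le> s * (1 - s) * eA / t + (1 + 1 / t) * (s * (1 - s) * eD) + s * eC"
    by linarith
  then have "s * (s * (a - d)) \<le> s * (s * t * (a + d) + (1 - s) * (eA + eD) / t + (1 - s) * eD + eC)"
    by (simp add: algebra_simps add_divide_distrib diff_divide_distrib)
  then show ?thesis using s(2) unfolding a_def d_def eA_def eD_def eC_def by simp
qed

section \<open>The bias bound\<close>

text \<open>In the application X0 = X(0,c), Y0 = X(0,\<not>c), X1 = X(1,\<not>c), Y1 = X(1,c),
  \<psi>0 = \<psi>(c) and \<psi>1 = \<psi>(\<not>c).\<close>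

lemma bias_le_Fbound:
  fixes X0 Y0 X1 Y1 R :: "complex^'n^'n"
  assumes psd: "psd X0" "psd Y0" "psd X1" "psd Y1"
    and sum: "X0 + Y0 = R" "X1 + Y1 = R" and tr: "trace R = 1"
    and \<psi>0: "cinner \<psi>0 \<psi>0 = 1" and \<psi>1: "cinner \<psi>1 \<psi>1 = 1"
    and overlap: "(cmod (cinner \<psi>0 \<psi>1))\<^sup>2 = (cos \<theta>)\<^sup>2" and \<theta>: "0 < \<theta>" "\<theta> \<le> pi / 2"
  shows "(Re (trace X0) + Re (trace X1)) / 2
    \<le> Fbound \<theta> ((Re (qform X0 \<psi>0) + Re (qform Y0 \<psi>1) + Re (qform X1 \<psi>1) + Re (qform Y1 \<psi>0)) / 2)"
proof -
  define s where "s = (sin \<theta>)\<^sup>2"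
  have s: "0 < s" "s \<le> 1" using \<theta> sin_gt_zero[of \<theta>] by (auto simp: s_def abs_square_le_1)
  have s_overlap: "s = 1 - (cmod (cinner \<psi>1 \<psi>0))\<^sup>2" "s = 1 - (cmod (cinner \<psi>0 \<psi>1))\<^sup>2"
    using overlap by (simp_all add: s_def sin_squared_eq cmod_cinner_commute[of \<psi>1])
  define x0 y0 x1 y1 where "x0 = Re (qform X0 \<psi>0)" and "y0 = Re (qform Y0 \<psi>1)"
    and "x1 = Re (qform X1 \<psi>1)" and "y1 = Re (qform Y1 \<psi>0)"
  define e0 e1 e2 e3 where "e0 = Re (trace X0) - x0" and "e1 = Re (trace Y0) - y0"
    and "e2 = Re (trace X1) - x1" and "e3 = Re (trace Y1) - y1"
  note defs = x0_def y0_def x1_def y1_def e0_def e1_def e2_def e3_def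
  have nn: "0 \<le> x0" "0 \<le> y0" "0 \<le> x1" "0 \<le> y1" "0 \<le> e0" "0 \<le> e1" "0 \<le> e2" "0 \<le> e3"
    unfolding defs using psd_qform_nonneg[OF psd(1)] psd_qform_nonneg[OF psd(2)]
      psd_qform_nonneg[OF psd(3)] psd_qform_nonneg[OF psd(4)]
      qform_le_trace[OF psd(1) \<psi>0] qform_le_trace[OF psd(2) \<psi>1]
      qform_le_trace[OF psd(3) \<psi>1] qform_le_trace[OF psd(4) \<psi>0] by auto
  have tr0: "x0 + e0 + y0 + e1 = 1" and tr1: "x1 + e2 + y1 + e3 = 1"
    using arg_cong[OF sum(1), of "\<lambda>A. Re (trace A)"] arg_cong[OF sum(2), of "\<lambda>A. Re (trace A)"] tr
    by (simp_all add: defs trace_eq_Determinants_trace trace_add)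
  define P where "P = (x0 + e0 + x1 + e2) / 2"
  define \<delta> where "\<delta> = 1 - (x0 + y0 + x1 + y1) / 2"
  have P: "2 * P = x0 + e0 + x1 + e2" "P \<le> 1"
    using nn tr0 tr1 by (simp_all add: P_def)
  have "2 * \<delta> = e0 + e1 + e2 + e3" using tr0 tr1 unfolding \<delta>_def by argo
  then have \<delta>: "2 * \<delta> = e0 + e1 + e2 + e3" "0 \<le> \<delta>" using nn by simp_all
  have "s * (2 * P - 1) \<le> s * t + (1 - s) * \<delta> / t + 2 * \<delta>" if t: "0 < t" for t
  proof (rule sum_of_tradeoffs_le[OF s t nn tr0 tr1 _ _ P(1) \<delta>(1)])
    show "s * (x0 - y1) \<le> s * t * (x0 + y1) + (1 - s) * (e0 + e3) / t + (1 - s) * e3 + e2"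
      using qform_diff_le_of_add_eq[OF psd sum(1)[folded sum(2)] \<psi>0 \<psi>1 s_overlap(1) s(1) t]
      unfolding defs .
    show "s * (x1 - y0) \<le> s * t * (x1 + y0) + (1 - s) * (e2 + e1) / t + (1 - s) * e1 + e0"
      using qform_diff_le_of_add_eq[OF psd(3,4,1,2) sum(2)[folded sum(1)] \<psi>1 \<psi>0 s_overlap(2) s(1) t]
      unfolding defs .
  qed
  then have "P \<le> min (1/2 + sqrt \<delta> / (sqrt 2 * s) + \<delta> / s) 1"
    by (rule bias_le_of_tradeoff[OF s \<delta>(2) P(2)])
  then show ?thesis by (simp add: Fbound_def s_def P_def \<delta>_def defs)
qed

lemma Py_eq_ptrace1:
  "Py \<rho> M c = (Re (trace (ptrace1 \<rho> (M False c))) + Re (trace (ptrace1 \<rho> (M True (\<not> c))))) / 2"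
  by (cases c) (simp_all add: Py_def UNIV_bool prob_kron_mat1)

lemma Ef_eq_ptrace1:
  "Ef \<rho> M \<psi> = (Re (qform (ptrace1 \<rho> (M False c)) (\<psi> c))
    + Re (qform (ptrace1 \<rho> (M False (\<not> c))) (\<psi> (\<not> c)))
    + Re (qform (ptrace1 \<rho> (M True (\<not> c))) (\<psi> (\<not> c)))
    + Re (qform (ptrace1 \<rho> (M True c)) (\<psi> c))) / 2"
  by (cases c) (simp_all add: Ef_def UNIV_bool prob_kron_proj field_simps)

theorem lemma1:
  fixes \<theta> :: real
    and \<rho> :: "complex^('a::finite \<times> 'b::finite)^('a \<times> 'b)"
    and M :: "bool \<Rightarrow> bool \<Rightarrow> complex^'a^'a"
    and \<psi> :: "bool \<Rightarrow> complex^'b"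
  assumes "0 < \<theta>" and "\<theta> \<le> pi / 2"
    and "cinner (\<psi> False) (\<psi> False) = 1" and "cinner (\<psi> True) (\<psi> True) = 1"
    and "(cmod (cinner (\<psi> False) (\<psi> True)))\<^sup>2 = (cos \<theta>)\<^sup>2"
    and "density \<rho>"
    and "\<And>b. povm2 (M b)"
  shows "(\<forall>c. Py \<rho> M c \<le> Fbound \<theta> (Ef \<rho> M \<psi>))
         \<and> concave_on {0..1} (Fbound \<theta>)
         \<and> antimono_on {0..1} (Fbound \<theta>)"
proof (intro conjI allI Fbound_concave Fbound_antimono)
  fix c
  define X where "X b a = ptrace1 \<rho> (M b a)" for b a
  have \<rho>: "psd \<rho>" "trace \<rho> = 1" using assms(6) by (auto simp: density_def)
  have psd: "psd (X b a)" for b a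
    using assms(7)[of b] psd_ptrace1[OF \<rho>(1)] by (cases a) (auto simp: povm2_def X_def)
  have sum: "X b a + X b (\<not> a) = ptrace1 \<rho> (mat 1)" for b a
    using assms(7)[of b] by (cases a) (auto simp: povm2_def X_def add.commute simp flip: ptrace1_add)
  have unit: "cinner (\<psi> a) (\<psi> a) = 1" for a using assms(3,4) by (cases a) auto
  have "(cmod (cinner (\<psi> c) (\<psi> (\<not> c))))\<^sup>2 = (cos \<theta>)\<^sup>2"
    using assms(5) by (cases c) (simp_all add: cmod_cinner_commute)
  from bias_le_Fbound[OF psd psd psd psd sum[of False c] sum[of True "\<not> c"] _ unit unit this assms(1,2)]
  show "Py \<rho> M c \<le> Fbound \<theta> (Ef \<rho> M \<psi>)"
    by (simp add: Py_eq_ptrace1[of _ _ c] Ef_eq_ptrace1[of _ _ _ c] X_def trace_ptrace1_mat1 \<rho>(2))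
qed

end
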